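(* Let $G$ be a finite cyclic group and $S$ a nonempty subset of $G$ such that $\Gamma=\mathrm{Cay}(G,S)$ is a connected arc-transitive normal Cayley digraph. Then every element of $S$ generates $G$, and $\mathrm{Aut}(G,S)$ acts regularly on $S$.
   Context: The Cayley digraph $\mathrm{Cay}(G,S)$ has vertex set $G$, with $x$ pointing to $y$ iff $yx^{-1}\in S$. For $g\in G$, $\widehat g$ is the permutation $x\mapsto xg$ of $G$, and $\widehat G=\{\widehat g: g\in G\}\leqslant\mathrm{Aut}(\mathrm{Cay}(G,S))$. The Cayley digraph is normal if $\widehat G$ is normal in $\mathrm{Aut}(\mathrm{Cay}(G,S))$. $\mathrm{Aut}(G,S)=\{\alpha\in\mathrm{Aut}(G): S^\alpha=S\}$. A digraph is connected if its underlying undirected graph is connected and arc-transitive if its automorphism group is transitive on its arcs. *)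

theory Defs
  imports "HOL-Algebra.Algebra"
begin

definition cay_arc :: "('a, 'b) monoid_scheme \<Rightarrow> 'a set \<Rightarrow> 'a \<Rightarrow> 'a \<Rightarrow> bool" where
  "cay_arc G S x y \<longleftrightarrow> x \<in> carrier G \<and> y \<in> carrier G \<and> y \<otimes>\<^bsub>G\<^esub> inv\<^bsub>G\<^esub> x \<in> S"

definition cay_aut :: "('a, 'b) monoid_scheme \<Rightarrow> 'a set \<Rightarrow> ('a \<Rightarrow> 'a) set" where
  "cay_aut G S = {\<sigma> \<in> Bij (carrier G).
     \<forall>x \<in> carrier G. \<forall>y \<in> carrier G. cay_arc G S x y \<longleftrightarrow> cay_arc G S (\<sigma> x) (\<sigma> y)}"

definition CayAutGroup :: "('a, 'b) monoid_scheme \<Rightarrow> 'a set \<Rightarrow> ('a \<Rightarrow> 'a) monoid" where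
  "CayAutGroup G S = (BijGroup (carrier G))\<lparr>carrier := cay_aut G S\<rparr>"

definition right_transl :: "('a, 'b) monoid_scheme \<Rightarrow> 'a \<Rightarrow> 'a \<Rightarrow> 'a" where
  "right_transl G g = (\<lambda>x \<in> carrier G. x \<otimes>\<^bsub>G\<^esub> g)"

definition right_regular :: "('a, 'b) monoid_scheme \<Rightarrow> ('a \<Rightarrow> 'a) set" where
  "right_regular G = right_transl G ` carrier G"

definition normal_cayley :: "('a, 'b) monoid_scheme \<Rightarrow> 'a set \<Rightarrow> bool" where
  "normal_cayley G S \<longleftrightarrow> right_regular G \<lhd> CayAutGroup G S"

definition cay_connected :: "('a, 'b) monoid_scheme \<Rightarrow> 'a set \<Rightarrow> bool" where
  "cay_connected G S \<longleftrightarrow>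
     (\<forall>x \<in> carrier G. \<forall>y \<in> carrier G.
        (x, y) \<in> ({(u, v). cay_arc G S u v} \<union> {(u, v). cay_arc G S v u})\<^sup>*)"

definition cay_arc_transitive :: "('a, 'b) monoid_scheme \<Rightarrow> 'a set \<Rightarrow> bool" where
  "cay_arc_transitive G S \<longleftrightarrow>
     (\<forall>x y x' y'. cay_arc G S x y \<longrightarrow> cay_arc G S x' y' \<longrightarrow>
        (\<exists>\<sigma> \<in> cay_aut G S. \<sigma> x = x' \<and> \<sigma> y = y'))"

definition aut_GS :: "('a, 'b) monoid_scheme \<Rightarrow> 'a set \<Rightarrow> ('a \<Rightarrow> 'a) set" where
  "aut_GS G S = {\<alpha> \<in> auto G. \<alpha> ` S = S}"

definition acts_regularly_on :: "('a \<Rightarrow> 'a) set \<Rightarrow> 'a set \<Rightarrow> bool" where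
  "acts_regularly_on A T \<longleftrightarrow> (\<forall>s \<in> T. \<forall>t \<in> T. \<exists>!\<alpha>. \<alpha> \<in> A \<and> \<alpha> s = t)"

end

theory Submission
  imports Defs
begin

text \<open>Since \<open>\<widehat>G\<close> is normal in \<open>Aut \<Gamma>\<close>, every automorphism \<open>\<sigma>\<close> of \<open>\<Gamma>\<close> satisfies
  \<open>\<sigma> (w y) = \<sigma> w h\<close> for some \<open>h\<close> depending only on \<open>y\<close>; if \<open>\<sigma>\<close> fixes \<open>1\<close>, then \<open>h = \<sigma> y\<close> and
  \<open>\<sigma>\<close> is a group automorphism preserving the out-neighbourhood \<open>S\<close> of \<open>1\<close>. Arc-transitivity
  makes the stabiliser of \<open>1\<close> transitive on \<open>S\<close>, so \<open>Aut(G,S)\<close> is transitive on \<open>S\<close>.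
  Endomorphisms of a cyclic group are power maps, hence \<open>S \<subseteq> \<langle>s\<rangle>\<close> for every \<open>s \<in> S\<close>, and
  connectivity gives \<open>\<langle>S\<rangle> = G\<close>. So each \<open>s \<in> S\<close> generates \<open>G\<close>, and an automorphism is
  determined by its value at \<open>s\<close>, which makes the action regular.\<close>

context group
begin

lemma cay_arc_one_iff: "S \<subseteq> carrier G \<Longrightarrow> cay_arc G S \<one> y \<longleftrightarrow> y \<in> S"
  by (auto simp: cay_arc_def)

lemma normal_cayley_conj_right_transl:
  assumes "normal_cayley G S" "\<sigma> \<in> cay_aut G S" "y \<in> carrier G"
  obtains h where "h \<in> carrier G" "\<And>w. w \<in> carrier G \<Longrightarrow> \<sigma> (w \<otimes> y) = \<sigma> w \<otimes> h"
proof -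
  let ?A = "CayAutGroup G S"
  have normal: "right_regular G \<lhd> ?A"
    using assms(1) by (simp add: normal_cayley_def)
  have carrier_A: "carrier ?A = cay_aut G S"
    by (simp add: CayAutGroup_def)
  have "\<sigma> \<otimes>\<^bsub>?A\<^esub> right_transl G y \<in> \<sigma> <#\<^bsub>?A\<^esub> right_regular G"
    using assms(3) by (auto simp: l_coset_def right_regular_def)
  also have "\<dots> = right_regular G #>\<^bsub>?A\<^esub> \<sigma>"
    using normal.coset_eq[OF normal] assms(2) carrier_A by blast
  finally obtain h where h: "h \<in> carrier G"
    and comm: "\<sigma> \<otimes>\<^bsub>?A\<^esub> right_transl G y = right_transl G h \<otimes>\<^bsub>?A\<^esub> \<sigma>"
    by (auto simp: r_coset_def right_regular_def)
  have \<sigma>_closed: "\<sigma> w \<in> carrier G" if "w \<in> carrier G" for w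
    using assms(2) that by (auto simp: cay_aut_def Bij_def bij_betw_apply)
  have "\<sigma> (w \<otimes> y) = \<sigma> w \<otimes> h" if w: "w \<in> carrier G" for w
  proof -
    have "right_transl G y \<in> Bij (carrier G)" "right_transl G h \<in> Bij (carrier G)"
      using subgroup.subset[OF normal_imp_subgroup[OF normal]] assms(3) h
      by (auto simp: carrier_A cay_aut_def right_regular_def)
    then show ?thesis
      using fun_cong[OF comm, of w] w assms(2,3) h \<sigma>_closed[OF w]
      by (simp add: CayAutGroup_def BijGroup_def compose_def right_transl_def cay_aut_def)
  qed
  with h show thesis by (rule that)
qed

lemma cay_aut_stabiliser_in_aut_GS:
  assumes "S \<subseteq> carrier G" "normal_cayley G S" "\<sigma> \<in> cay_aut G S" "\<sigma> \<one> = \<one>"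
  shows "\<sigma> \<in> aut_GS G S"
proof -
  have bij: "bij_betw \<sigma> (carrier G) (carrier G)" and \<sigma>_Bij: "\<sigma> \<in> Bij (carrier G)"
    using assms(3) by (auto simp: cay_aut_def Bij_def)
  have "\<sigma> (w \<otimes> y) = \<sigma> w \<otimes> \<sigma> y" if w: "w \<in> carrier G" and y: "y \<in> carrier G" for w y
  proof -
    obtain h where h: "h \<in> carrier G" "\<And>w. w \<in> carrier G \<Longrightarrow> \<sigma> (w \<otimes> y) = \<sigma> w \<otimes> h"
      using normal_cayley_conj_right_transl[OF assms(2,3) y] by blast
    \<comment> \<open>at \<open>w = \<one>\<close> the equation gives \<open>h = \<sigma> y\<close>\<close>
    from h(2)[of \<one>] h(2)[OF w] w y h(1) assms(4)
    show ?thesis by simp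
  qed
  then have hom: "\<sigma> \<in> hom G G"
    using bij_betw_apply[OF bij] by (auto simp: hom_def)
  have S_invariant: "y \<in> S \<longleftrightarrow> \<sigma> y \<in> S" if "y \<in> carrier G" for y
  proof -
    have "cay_arc G S \<one> y \<longleftrightarrow> cay_arc G S (\<sigma> \<one>) (\<sigma> y)"
      using assms(3) that by (simp add: cay_aut_def)
    then show ?thesis
      using assms(4) cay_arc_one_iff[OF assms(1)] by simp
  qed
  have "S \<subseteq> \<sigma> ` carrier G"
    using bij assms(1) by (simp add: bij_betw_def)
  then have "\<sigma> ` S = S"
    using S_invariant assms(1) by blast
  with hom \<sigma>_Bij show ?thesis
    by (simp add: aut_GS_def auto_def)
qed

lemma aut_GS_transitive_on_connection_set:
  assumes "S \<subseteq> carrier G" "normal_cayley G S" "cay_arc_transitive G S" "s \<in> S" "t \<in> S"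
  obtains \<alpha> where "\<alpha> \<in> aut_GS G S" "\<alpha> s = t"
proof -
  have "cay_arc G S \<one> s" "cay_arc G S \<one> t"
    using assms(1,4,5) cay_arc_one_iff by auto
  then obtain \<sigma> where "\<sigma> \<in> cay_aut G S" "\<sigma> \<one> = \<one>" "\<sigma> s = t"
    using assms(3) unfolding cay_arc_transitive_def by blast
  then show thesis
    using that cay_aut_stabiliser_in_aut_GS[OF assms(1,2)] by blast
qed

lemma cay_connected_imp_generate_eq_carrier:
  assumes "S \<subseteq> carrier G" "cay_connected G S"
  shows "generate G S = carrier G"
proof
  show "generate G S \<subseteq> carrier G"
    using generate_incl assms(1) .
  show "carrier G \<subseteq> generate G S"
  proof
    fix y assume "y \<in> carrier G"
    then have "(\<one>, y) \<in> ({(u, v). cay_arc G S u v} \<union> {(u, v). cay_arc G S v u})\<^sup>*"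
      using assms(2) by (auto simp: cay_connected_def)
    then show "y \<in> generate G S"
    proof (induction rule: rtrancl_induct)
      case base
      show ?case by (rule generate.one)
    next
      case (step x z)
      then have x: "x \<in> carrier G" and z: "z \<in> carrier G"
        by (auto simp: cay_arc_def)
      from step(2) show ?case
      proof
        assume "(x, z) \<in> {(u, v). cay_arc G S u v}"
        then have "z \<otimes> inv x \<in> S" by (auto simp: cay_arc_def)
        moreover have "z = (z \<otimes> inv x) \<otimes> x"
          using x z by (simp add: m_assoc)
        ultimately show ?thesis
          using generate.eng[OF generate.incl step(3)] by metis
      next
        assume "(x, z) \<in> {(u, v). cay_arc G S v u}"
        then have "x \<otimes> inv z \<in> S" by (auto simp: cay_arc_def)
        moreover have "z = inv (x \<otimes> inv z) \<otimes> x"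
          using x z by (simp add: m_assoc inv_mult_group)
        ultimately show ?thesis
          using generate.eng[OF generate.inv step(3)] by metis
      qed
    qed
  qed
qed

lemma cyclic_group_hom_is_int_pow:
  assumes "cyclic_group G" "\<alpha> \<in> hom G G"
  obtains k :: int where "\<And>x. x \<in> carrier G \<Longrightarrow> \<alpha> x = x [^] k"
proof -
  obtain g where g: "g \<in> carrier G" "carrier G = range (\<lambda>n::int. g [^] n)"
    using assms(1) cyclic_group by blast
  then have "\<alpha> g \<in> carrier G"
    using assms(2) by (auto simp: hom_def)
  then obtain k :: int where k: "\<alpha> g = g [^] k"
    using g(2) by auto
  have "\<alpha> x = x [^] k" if "x \<in> carrier G" for x
  proof -
    obtain n :: int where n: "x = g [^] n"
      using g(2) \<open>x \<in> carrier G\<close> by auto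
    have "\<alpha> x = \<alpha> g [^] n"
      using n hom_int_pow[OF assms(2) g(1) is_group is_group] by simp
    also have "\<dots> = x [^] k"
      using k n g(1) by (simp add: int_pow_pow mult.commute)
    finally show ?thesis .
  qed
  then show thesis by (rule that)
qed

lemma cyclic_group_hom_image_in_generate:
  assumes "cyclic_group G" "\<alpha> \<in> hom G G" "s \<in> carrier G"
  shows "\<alpha> s \<in> generate G {s}"
proof -
  obtain k :: int where "\<alpha> s = s [^] k"
    using cyclic_group_hom_is_int_pow[OF assms(1,2)] assms(3) by blast
  then show ?thesis
    using assms(3) subgroup_int_pow_closed[OF generate_is_subgroup] generate.incl[of s "{s}" G]
    by simp
qed

lemma hom_eq_on_generate:
  assumes "\<alpha> \<in> hom G G" "\<beta> \<in> hom G G" "A \<subseteq> carrier G" "\<And>a. a \<in> A \<Longrightarrow> \<alpha> a = \<beta> a"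
    and "x \<in> generate G A"
  shows "\<alpha> x = \<beta> x"
  using assms(5)
proof (induction rule: generate.induct)
  case one
  show ?case
    using hom_one[OF assms(1) is_group is_group] hom_one[OF assms(2) is_group is_group] by simp
next
  case (incl a)
  then show ?case by (rule assms(4))
next
  case (inv a)
  interpret \<alpha>: group_hom G G \<alpha> using assms(1) by unfold_locales
  interpret \<beta>: group_hom G G \<beta> using assms(2) by unfold_locales
  from inv assms(3,4) show ?case by auto
next
  case (eng x y)
  then have "x \<in> carrier G" "y \<in> carrier G"
    using generate_incl assms(3) by auto
  with eng assms(1,2) show ?case by (simp add: hom_mult)
qed

lemma auto_eq_if_eq_on_generator:
  assumes "\<alpha> \<in> auto G" "\<beta> \<in> auto G" "generate G {s} = carrier G" "s \<in> carrier G" "\<alpha> s = \<beta> s"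
  shows "\<alpha> = \<beta>"
proof (rule extensionalityI)
  show "\<alpha> \<in> extensional (carrier G)" "\<beta> \<in> extensional (carrier G)"
    using assms(1,2) by (auto simp: auto_def Bij_def)
  show "\<alpha> x = \<beta> x" if "x \<in> carrier G" for x
    using hom_eq_on_generate[of \<alpha> \<beta> "{s}" x] assms that by (auto simp: auto_def)
qed

lemma generate_singleton_eq_carrier_if_hom_orbit:
  assumes "cyclic_group G" "S \<subseteq> carrier G" "generate G S = carrier G" "s \<in> S"
    and "\<And>t. t \<in> S \<Longrightarrow> \<exists>\<alpha> \<in> hom G G. \<alpha> s = t"
  shows "generate G {s} = carrier G"
proof -
  have s: "s \<in> carrier G" using assms(2,4) by auto
  have "S \<subseteq> generate G {s}"
    using assms(5) cyclic_group_hom_image_in_generate[OF assms(1) _ s] by blast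
  then have "generate G S \<subseteq> generate G {s}"
    using generate_subgroup_incl generate_is_subgroup s by blast
  then show ?thesis
    using assms(3) generate_incl s by blast
qed

lemma acts_regularly_on_if_transitive_on_generators:
  assumes "A \<subseteq> auto G" "S \<subseteq> carrier G" "\<And>s. s \<in> S \<Longrightarrow> generate G {s} = carrier G"
    and "\<And>s t. s \<in> S \<Longrightarrow> t \<in> S \<Longrightarrow> \<exists>\<alpha> \<in> A. \<alpha> s = t"
  shows "acts_regularly_on A S"
  unfolding acts_regularly_on_def
proof (intro ballI)
  fix s t assume "s \<in> S" "t \<in> S"
  then obtain \<alpha> where \<alpha>: "\<alpha> \<in> A" "\<alpha> s = t"
    using assms(4) by blast
  moreover have "\<beta> = \<alpha>" if "\<beta> \<in> A" "\<beta> s = t" for \<beta>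
    using auto_eq_if_eq_on_generator assms(1,2,3) \<open>s \<in> S\<close> \<alpha> that by blast
  ultimately show "\<exists>!\<alpha>. \<alpha> \<in> A \<and> \<alpha> s = t"
    by blast
qed

end

theorem lemma3p2:
  fixes G :: "('a, 'b) monoid_scheme" and S :: "'a set"
  assumes "group G" and "finite (carrier G)" and "cyclic_group G"
    and "S \<subseteq> carrier G" and "S \<noteq> {}"
    and "cay_connected G S" and "cay_arc_transitive G S" and "normal_cayley G S"
  shows "(\<forall>s \<in> S. generate G {s} = carrier G) \<and> acts_regularly_on (aut_GS G S) S"
proof -
  interpret group G by (rule assms(1))
  have transitive: "\<exists>\<alpha> \<in> aut_GS G S. \<alpha> s = t" if "s \<in> S" "t \<in> S" for s t
    using aut_GS_transitive_on_connection_set[OF assms(4,8,7) that] by blast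
  have aut_GS_auto: "aut_GS G S \<subseteq> auto G"
    by (auto simp: aut_GS_def)
  have generator: "generate G {s} = carrier G" if "s \<in> S" for s
  proof (rule generate_singleton_eq_carrier_if_hom_orbit[OF assms(3,4) _ that])
    show "generate G S = carrier G"
      using cay_connected_imp_generate_eq_carrier[OF assms(4,6)] .
    show "\<exists>\<alpha> \<in> hom G G. \<alpha> s = t" if "t \<in> S" for t
      using transitive[OF \<open>s \<in> S\<close> that] aut_GS_auto by (auto simp: auto_def)
  qed
  then show ?thesis
    using acts_regularly_on_if_transitive_on_generators[OF aut_GS_auto assms(4)] transitive
    by blast
qed

end
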